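(* For every tight intersection lattice $L$, we have $\bullet(\mathrm{nti}(L))=2^{\hat 1_L}$, i.e., every subset of $\hat 1_L$ belongs to $\bullet(\mathrm{nti}(L))$.
   Context: A finite family $\mathcal{F}$ of sets is non-trivial if it is non-empty and no $X\in\mathcal{F}$ satisfies $X=\bigcup\mathcal{F}$. For such $\mathcal{F}$ and non-empty $\mathcal{T}\subseteq\mathcal{F}$, let $S_{\mathcal{T}}=\bigcap\mathcal{T}$, and let $S_\emptyset=\bigcup\mathcal{F}$. The intersection lattice of $\mathcal{F}$ is $\mathbb{L}_{\mathcal{F}}=(\{S_{\mathcal{T}}\mid\mathcal{T}\subseteq\mathcal{F}\},\subseteq)$, with greatest element $\hat 1=\bigcup\mathcal{F}$; an intersection lattice is one of this form. For $L=\mathbb{L}_{\mathcal{F}}$ and $x\in\hat 1$, let $\min_L(x)=S_{\{X\in\mathcal{F}\mid x\in X\}}$. $L$ is tight if for every $U\in L$ with $U\neq\hat 1$ there is exactly one $x\in\hat 1$ with $\min_L(x)=U$. Let $\mathrm{nti}(L)=\{U\in L\mid U\neq\hat 1\}$. For sets $A,B$, $A\,\dot\cup\,B=A\cup B$ is defined only when $A\cap B=\emptyset$, and $A\,\dot\setminus\,B=A\setminus B$ is defined only when $B\subseteq A$. For a finite family $\mathcal{G}$ of sets, $\bullet(\mathcal{G})$ is the smallest family of sets containing $\emptyset$ and every member of $\mathcal{G}$ and closed under all well-defined disjoint unions and subset complements. *)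

theory Defs
  imports Main
begin

definition nontrivial_family :: "'a set set \<Rightarrow> bool" where
  "nontrivial_family F \<longleftrightarrow> finite F \<and> F \<noteq> {} \<and> (\<forall>X\<in>F. X \<noteq> \<Union>F)"

definition S_fam :: "'a set set \<Rightarrow> 'a set set \<Rightarrow> 'a set" where
  "S_fam F T = (if T = {} then \<Union>F else \<Inter>T)"

definition int_lattice :: "'a set set \<Rightarrow> 'a set set" where
  "int_lattice F = {S_fam F T | T. T \<subseteq> F}"

definition top_elem :: "'a set set \<Rightarrow> 'a set" where
  "top_elem F = \<Union>F"

definition min_L :: "'a set set \<Rightarrow> 'a \<Rightarrow> 'a set" where
  "min_L F x = S_fam F {X \<in> F. x \<in> X}"

definition tight :: "'a set set \<Rightarrow> bool" where
  "tight F \<longleftrightarrow> (\<forall>U \<in> int_lattice F. U \<noteq> top_elem F \<longrightarrow>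
      (\<exists>!x. x \<in> top_elem F \<and> min_L F x = U))"

definition nti :: "'a set set \<Rightarrow> 'a set set" where
  "nti F = {U \<in> int_lattice F. U \<noteq> top_elem F}"

inductive_set bullet :: "'a set set \<Rightarrow> 'a set set" for G :: "'a set set" where
  empty: "{} \<in> bullet G"
| base: "A \<in> G \<Longrightarrow> A \<in> bullet G"
| disj_union: "A \<in> bullet G \<Longrightarrow> B \<in> bullet G \<Longrightarrow> A \<inter> B = {} \<Longrightarrow> A \<union> B \<in> bullet G"
| subset_diff: "A \<in> bullet G \<Longrightarrow> B \<in> bullet G \<Longrightarrow> B \<subseteq> A \<Longrightarrow> A - B \<in> bullet G"

end

theory Submission
  imports Defs
begin

text \<open>Tightness makes \<open>x \<mapsto> min_L x\<close> injective on \<open>\<hat>1\<close>; since its values lie in the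
  finite family \<open>nti L\<close>, the set \<open>\<hat>1\<close> is finite. As \<open>y \<in> min_L x\<close> implies
  \<open>min_L y \<subseteq> min_L x\<close>, injectivity gives \<open>min_L y \<subset> min_L x\<close> for \<open>y \<noteq> x\<close>. By
  induction on \<open>|min_L x|\<close>, the set \<open>min_L x - {x}\<close> is a disjoint union of singletons
  already in \<open>\<bullet>(nti L)\<close>, so \<open>{x} = min_L x - (min_L x - {x})\<close> lies in it too; with all
  singletons, every subset of \<open>\<hat>1\<close> does.\<close>

lemma finite_set_in_bullet_if_singletons:
  assumes "finite A" "\<And>x. x \<in> A \<Longrightarrow> {x} \<in> bullet G"
  shows "A \<in> bullet G"
  using assms
proof (induction A rule: finite_induct)
  case empty
  show ?case by (rule bullet.empty)
next
  case (insert x A)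
  have "{x} \<union> A \<in> bullet G"
    using insert by (intro bullet.disj_union) auto
  then show ?case by simp
qed

lemma Pow_subset_bullet_if_injective_closure:
  assumes "finite V" and inj: "inj_on m V"
    and extensive: "\<And>x. x \<in> V \<Longrightarrow> x \<in> m x"
    and closed: "\<And>x. x \<in> V \<Longrightarrow> m x \<subseteq> V"
    and mono: "\<And>x y. x \<in> V \<Longrightarrow> y \<in> m x \<Longrightarrow> m y \<subseteq> m x"
    and generators: "\<And>x. x \<in> V \<Longrightarrow> m x \<in> G"
  shows "Pow V \<subseteq> bullet G"
proof -
  have singleton: "{x} \<in> bullet G" if "x \<in> V" for x
    using that
  proof (induction x rule: measure_induct_rule[of "\<lambda>x. card (m x)"])
    case (less x)
    have finite_mx: "finite (m x)"
      using closed[OF less.prems] \<open>finite V\<close> by (rule finite_subset)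
    have smaller: "{y} \<in> bullet G" if y: "y \<in> m x - {x}" for y
    proof -
      have "y \<in> V" using y closed[OF less.prems] by auto
      have "m y \<noteq> m x"
        using inj_onD[OF inj _ \<open>y \<in> V\<close> less.prems] y by blast
      then have "m y \<subset> m x" using mono[OF less.prems] y by blast
      then have "card (m y) < card (m x)" by (rule psubset_card_mono[OF finite_mx])
      then show ?thesis using less.IH \<open>y \<in> V\<close> by blast
    qed
    have "m x - {x} \<in> bullet G"
    proof (rule finite_set_in_bullet_if_singletons)
      show "finite (m x - {x})" using finite_mx by simp
    qed (rule smaller)
    with bullet.base[OF generators[OF less.prems]]
    have "m x - (m x - {x}) \<in> bullet G" by (rule bullet.subset_diff) blast
    moreover have "m x - (m x - {x}) = {x}" using extensive[OF less.prems] by auto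
    ultimately show ?case by simp
  qed
  show ?thesis
  proof
    fix A assume "A \<in> Pow V"
    then have "A \<subseteq> V" by simp
    show "A \<in> bullet G"
    proof (rule finite_set_in_bullet_if_singletons)
      show "finite A" using \<open>A \<subseteq> V\<close> \<open>finite V\<close> by (rule finite_subset)
      show "{x} \<in> bullet G" if "x \<in> A" for x
        using that \<open>A \<subseteq> V\<close> singleton by blast
    qed
  qed
qed

lemma min_L_eq_Inter:
  assumes "x \<in> top_elem F"
  shows "min_L F x = \<Inter>{X \<in> F. x \<in> X}"
  using assms by (auto simp: min_L_def S_fam_def top_elem_def)

lemma mem_min_L:
  assumes "x \<in> top_elem F"
  shows "x \<in> min_L F x"
  using assms by (simp add: min_L_eq_Inter)

lemma min_L_subset_top_elem:
  assumes "x \<in> top_elem F"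
  shows "min_L F x \<subseteq> top_elem F"
  using assms by (auto simp: min_L_eq_Inter top_elem_def)

lemma min_L_mono:
  assumes "x \<in> top_elem F" "y \<in> min_L F x"
  shows "min_L F y \<subseteq> min_L F x"
proof -
  have "y \<in> top_elem F" using min_L_subset_top_elem[OF assms(1)] assms(2) by blast
  then show ?thesis
    using assms unfolding min_L_eq_Inter[OF assms(1)] min_L_eq_Inter[OF \<open>y \<in> top_elem F\<close>]
    by blast
qed

lemma min_L_in_nti:
  assumes "nontrivial_family F" "x \<in> top_elem F"
  shows "min_L F x \<in> nti F"
proof -
  obtain X where X: "X \<in> F" "x \<in> X"
    using assms(2) by (auto simp: top_elem_def)
  have "min_L F x \<subseteq> X" using X assms(2) by (auto simp: min_L_eq_Inter)
  moreover have "X \<subseteq> top_elem F" "X \<noteq> top_elem F"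
    using assms(1) X by (auto simp: nontrivial_family_def top_elem_def)
  ultimately have "min_L F x \<noteq> top_elem F" by blast
  moreover have "min_L F x \<in> int_lattice F"
    unfolding int_lattice_def min_L_def by blast
  ultimately show ?thesis by (simp add: nti_def)
qed

lemma finite_nti:
  assumes "finite F"
  shows "finite (nti F)"
proof -
  have "int_lattice F = S_fam F ` Pow F" by (auto simp: int_lattice_def)
  then show ?thesis using assms by (simp add: nti_def)
qed

lemma inj_on_min_L_if_tight:
  assumes "nontrivial_family F" "tight F"
  shows "inj_on (min_L F) (top_elem F)"
proof (rule inj_onI)
  fix x y
  assume x: "x \<in> top_elem F" and y: "y \<in> top_elem F" and eq: "min_L F x = min_L F y"
  have "min_L F x \<in> int_lattice F" "min_L F x \<noteq> top_elem F"
    using min_L_in_nti[OF assms(1) x] by (auto simp: nti_def)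
  with assms(2) have "\<exists>!z. z \<in> top_elem F \<and> min_L F z = min_L F x"
    unfolding tight_def by (elim ballE impE) auto
  then show "x = y" using x y eq by blast
qed

lemma finite_top_elem_if_tight:
  assumes "nontrivial_family F" "tight F"
  shows "finite (top_elem F)"
proof -
  have "min_L F ` top_elem F \<subseteq> nti F" using min_L_in_nti[OF assms(1)] by blast
  moreover have "finite (nti F)"
    using assms(1) by (intro finite_nti) (simp add: nontrivial_family_def)
  ultimately have "finite (min_L F ` top_elem F)" by (rule finite_subset)
  then show ?thesis using inj_on_min_L_if_tight[OF assms] by (rule finite_imageD)
qed

theorem fact4p8:
  fixes F :: "'a set set"
  assumes "nontrivial_family F"
    and "tight F"
  shows "\<forall>A. A \<subseteq> top_elem F \<longrightarrow> A \<in> bullet (nti F)"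
proof -
  have "Pow (top_elem F) \<subseteq> bullet (nti F)"
  proof (rule Pow_subset_bullet_if_injective_closure)
    show "finite (top_elem F)" using assms by (rule finite_top_elem_if_tight)
    show "inj_on (min_L F) (top_elem F)" using assms by (rule inj_on_min_L_if_tight)
  qed (simp_all add: mem_min_L min_L_subset_top_elem min_L_mono min_L_in_nti[OF assms(1)])
  then show ?thesis by blast
qed

end
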